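(* Let $X$ be a compact Hausdorff topological space. Then $H_n^M(X)=0$ for all $n>0$.
   Context: A continuous multivalued map $X\to Y$ is a subset $T\subset X\times Y$ such that the restriction of the projection $X\times Y\to X$ to $T$ is proper (universally closed; equivalently closed with compact fibers), surjective and has finite fibers; $M(X,Y)$ is the set of these. For $\alpha\in M(\Delta_n,X)$ and a continuous map $f:\Delta_{n-1}\to\Delta_n$, $\alpha\circ\mathrm{gr}(f)=\{(s,x)\in\Delta_{n-1}\times X:(f(s),x)\in\alpha\}$. Let $\Delta_n=\{(t_0,\dots,t_n)\in\mathbb{R}^{n+1}: t_i\ge 0,\ \sum t_i=1\}$ and $\delta^n_i:\Delta_{n-1}\to\Delta_n$, $\delta^n_i(t_0,\dots,t_{n-1})=(t_0,\dots,t_{i-1},0,t_i,\dots,t_{n-1})$ for $0\le i\le n$. Set $S_n^M(X)=M(\Delta_n,X)$, $d^i_n(\alpha)=\alpha\circ\mathrm{gr}(\delta^n_i)$, let $C_n^M(X)$ be the free abelian group with basis $S_n^M(X)$ and differential $d_n=\sum_{i=0}^n(-1)^i d^i_n$, and define the multivalued singular homology $H_n^M(X)=H_n(C_*^M(X),d_* )$. *)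

theory Defs
  imports "HOL-Homology.Homology"
begin

definition simplex_top :: "nat \<Rightarrow> (nat \<Rightarrow> real) topology" where
  "simplex_top n = subtopology (powertop_real UNIV) (standard_simplex n)"

text \<open>Continuous multivalued maps X -> Y: subsets T of X x Y such that the projection
  T -> X is proper, surjective and has finite fibres.\<close>
definition mv_map :: "'a topology \<Rightarrow> 'b topology \<Rightarrow> ('a \<times> 'b) set \<Rightarrow> bool" where
  "mv_map X Y T \<longleftrightarrow>
     T \<subseteq> topspace X \<times> topspace Y
   \<and> proper_map (subtopology (prod_topology X Y) T) X fst
   \<and> fst ` T = topspace X
   \<and> (\<forall>x\<in>topspace X. finite {y. (x, y) \<in> T})"

definition mv_simplex_set :: "nat \<Rightarrow> 'a topology \<Rightarrow> ((nat \<Rightarrow> real) \<times> 'a) set set" where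
  "mv_simplex_set n X = {\<alpha>. mv_map (simplex_top n) X \<alpha>}"

text \<open>d^i_n(alpha) = alpha o gr(delta^n_i), with delta^n_i = simplical_face i.\<close>
definition mv_face :: "nat \<Rightarrow> nat \<Rightarrow> ((nat \<Rightarrow> real) \<times> 'a) set \<Rightarrow> ((nat \<Rightarrow> real) \<times> 'a) set" where
  "mv_face n i \<alpha> = {(s, x). s \<in> standard_simplex (n - 1) \<and> (simplical_face i s, x) \<in> \<alpha>}"

definition mv_chain_group :: "nat \<Rightarrow> 'a topology \<Rightarrow> (((nat \<Rightarrow> real) \<times> 'a) set \<Rightarrow>\<^sub>0 int) monoid" where
  "mv_chain_group n X = free_Abelian_group (mv_simplex_set n X)"

definition mv_boundary :: "nat \<Rightarrow> (((nat \<Rightarrow> real) \<times> 'a) set \<Rightarrow>\<^sub>0 int) \<Rightarrow> (((nat \<Rightarrow> real) \<times> 'a) set \<Rightarrow>\<^sub>0 int)" where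
  "mv_boundary n c = frag_extend (\<lambda>\<alpha>. \<Sum>i\<le>n. frag_cmul ((-1) ^ i) (frag_of (mv_face n i \<alpha>))) c"

definition mv_cycle_group :: "nat \<Rightarrow> 'a topology \<Rightarrow> (((nat \<Rightarrow> real) \<times> 'a) set \<Rightarrow>\<^sub>0 int) monoid" where
  "mv_cycle_group n X = subgroup_generated (mv_chain_group n X)
      {c \<in> carrier (mv_chain_group n X). mv_boundary n c = 0}"

definition mv_homology_group :: "nat \<Rightarrow> 'a topology \<Rightarrow> (((nat \<Rightarrow> real) \<times> 'a) set \<Rightarrow>\<^sub>0 int) set monoid" where
  "mv_homology_group n X = mv_cycle_group n X Mod (mv_boundary (Suc n) ` carrier (mv_chain_group (Suc n) X))"

end

theory Submission
  imports Defs "HOL-Analysis.Abstract_Topological_Spaces"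
begin

(* Cone off a multivalued n-simplex alpha to a point x0: on the part t_0 <= 1/2 of the
   (n+1)-simplex take alpha after radial projection from the vertex e_0, on the part
   t_0 >= 1/2 take x0. Since the maps are multivalued the two pieces can simply be united
   (both values are taken on t_0 = 1/2), so no homotopy is needed; compactness of X makes
   the union a closed, hence proper, correspondence. Face 0 of the cone is alpha and face
   i+1 is the cone of face i of alpha, so the cone operator C satisfies d C + C d = id in
   positive degrees, and every cycle z equals d (C z). *)

(* Radial projection from the vertex e_0 onto the opposite face, a copy of Delta_n;
   it is only meaningful for t_0 < 1. *)
definition cone_projection :: "(nat \<Rightarrow> real) \<Rightarrow> (nat \<Rightarrow> real)" where
  "cone_projection t = (\<lambda>i. t (Suc i) / (1 - t 0))"

lemma cone_projection_in_standard_simplex: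
  assumes t: "t \<in> standard_simplex (Suc n)" and "t 0 < 1"
  shows "cone_projection t \<in> standard_simplex n"
proof -
  have nonneg: "\<And>i. 0 \<le> t i" and vanish: "\<And>i. Suc n < i \<Longrightarrow> t i = 0"
    and total: "sum t {..Suc n} = 1"
    using t by (auto simp: standard_simplex_def)
  have tail: "(\<Sum>i\<le>n. t (Suc i)) = 1 - t 0"
    using total unfolding sum.atMost_Suc_shift by simp
  have "t (Suc i) \<le> 1 - t 0" for i
  proof (cases "i \<le> n")
    case True
    then show ?thesis
      unfolding tail [symmetric] using nonneg by (intro member_le_sum) auto
  next
    case False
    then show ?thesis using vanish \<open>t 0 < 1\<close> by simp
  qed
  with nonneg vanish tail \<open>t 0 < 1\<close> show ?thesis
    by (auto simp: standard_simplex_def cone_projection_def not_le simp flip: sum_divide_distrib)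
qed

lemma cone_projection_simplical_face_0 [simp]: "cone_projection (simplical_face 0 s) = s"
  by (simp add: cone_projection_def simplical_face_def)

lemma cone_projection_simplical_face_Suc:
  "cone_projection (simplical_face (Suc k) s) = simplical_face k (cone_projection s)"
  by (auto simp: cone_projection_def simplical_face_def fun_eq_iff)

lemma simplical_face_Suc_0 [simp]: "simplical_face (Suc k) s 0 = s 0"
  by (simp add: simplical_face_def)

lemma simplical_face_0_0 [simp]: "simplical_face 0 s 0 = 0"
  by (simp add: simplical_face_def)

definition mv_cone :: "nat \<Rightarrow> 'a \<Rightarrow> ((nat \<Rightarrow> real) \<times> 'a) set \<Rightarrow> ((nat \<Rightarrow> real) \<times> 'a) set" where
  "mv_cone n x0 \<alpha> =
     {(t, x). t \<in> standard_simplex (Suc n) \<and> t 0 \<le> 1/2 \<and> (cone_projection t, x) \<in> \<alpha>}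
   \<union> {(t, x). t \<in> standard_simplex (Suc n) \<and> 1/2 \<le> t 0 \<and> x = x0}"

lemma mv_face_mv_cone_0:
  assumes "\<alpha> \<subseteq> standard_simplex n \<times> UNIV"
  shows "mv_face (Suc n) 0 (mv_cone n x0 \<alpha>) = \<alpha>"
  using assms by (auto simp: mv_face_def mv_cone_def simplical_face_in_standard_simplex)

lemma mv_face_mv_cone_Suc:
  assumes "k \<le> Suc n"
  shows "mv_face (Suc (Suc n)) (Suc k) (mv_cone (Suc n) x0 \<alpha>) = mv_cone n x0 (mv_face (Suc n) k \<alpha>)"
  using assms
  by (auto simp: mv_face_def mv_cone_def cone_projection_simplical_face_Suc
      simplical_face_in_standard_simplex cone_projection_in_standard_simplex)

definition mv_cone_chain ::
    "nat \<Rightarrow> 'a \<Rightarrow> (((nat \<Rightarrow> real) \<times> 'a) set \<Rightarrow>\<^sub>0 int) \<Rightarrow> (((nat \<Rightarrow> real) \<times> 'a) set \<Rightarrow>\<^sub>0 int)" where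
  "mv_cone_chain n x0 = frag_extend (\<lambda>\<alpha>. frag_of (mv_cone n x0 \<alpha>))"

lemma mv_boundary_mv_cone:
  assumes "\<alpha> \<subseteq> standard_simplex (Suc n) \<times> UNIV"
  shows "mv_boundary (Suc (Suc n)) (frag_of (mv_cone (Suc n) x0 \<alpha>))
           = frag_of \<alpha> - mv_cone_chain n x0 (mv_boundary (Suc n) (frag_of \<alpha>))"
proof -
  have "mv_boundary (Suc (Suc n)) (frag_of (mv_cone (Suc n) x0 \<alpha>))
     = (\<Sum>i\<le>Suc (Suc n). frag_cmul ((-1) ^ i) (frag_of (mv_face (Suc (Suc n)) i (mv_cone (Suc n) x0 \<alpha>))))"
    by (simp add: mv_boundary_def)
  also have "\<dots> = frag_of \<alpha>
      + (\<Sum>k\<le>Suc n. frag_cmul ((-1) ^ Suc k) (frag_of (mv_cone n x0 (mv_face (Suc n) k \<alpha>))))"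
    unfolding sum.atMost_Suc_shift using assms by (simp add: mv_face_mv_cone_0 mv_face_mv_cone_Suc)
  also have "\<dots> = frag_of \<alpha>
      - (\<Sum>k\<le>Suc n. frag_cmul ((-1) ^ k) (frag_of (mv_cone n x0 (mv_face (Suc n) k \<alpha>))))"
    by (simp add: sum_negf [symmetric])
  also have "(\<Sum>k\<le>Suc n. frag_cmul ((-1) ^ k) (frag_of (mv_cone n x0 (mv_face (Suc n) k \<alpha>))))
      = mv_cone_chain n x0 (mv_boundary (Suc n) (frag_of \<alpha>))"
    by (simp add: mv_cone_chain_def mv_boundary_def frag_extend_sum frag_extend_cmul del: sum.atMost_Suc)
  finally show ?thesis .
qed

lemma mv_boundary_mv_cone_chain:
  assumes "Poly_Mapping.keys c \<subseteq> Pow (standard_simplex (Suc n) \<times> UNIV)"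
  shows "mv_boundary (Suc (Suc n)) (mv_cone_chain (Suc n) x0 c)
           = c - mv_cone_chain n x0 (mv_boundary (Suc n) c)"
  using assms
proof (induction c rule: frag_induction)
  case zero
  then show ?case by (simp add: mv_cone_chain_def mv_boundary_def)
next
  case (one \<alpha>)
  then show ?case by (simp add: mv_cone_chain_def mv_boundary_mv_cone [folded mv_cone_chain_def])
next
  case (diff a b)
  then show ?case
    by (simp add: mv_cone_chain_def mv_boundary_def frag_extend_diff)
qed

lemma topspace_simplex_top [simp]: "topspace (simplex_top n) = standard_simplex n"
  by (simp add: simplex_top_def)

lemma compact_space_simplex_top: "compact_space (simplex_top n)"
  unfolding simplex_top_def by (rule compact_space_subtopology [OF compactin_standard_simplex])

lemma Hausdorff_space_simplex_top: "Hausdorff_space (simplex_top n)"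
  unfolding simplex_top_def
  by (rule Hausdorff_space_subtopology) (metis Hausdorff_space_euclidean Hausdorff_space_product_topology)

lemma continuous_map_simplex_top_coordinate: "continuous_map (simplex_top n) euclideanreal (\<lambda>t. t i)"
  unfolding simplex_top_def
  by (rule continuous_map_from_subtopology [OF continuous_map_product_projection]) simp

lemma continuous_map_cone_projection:
  "continuous_map (subtopology (simplex_top (Suc n)) {t \<in> standard_simplex (Suc n). t 0 \<le> 1/2})
     (simplex_top n) cone_projection"
proof -
  let ?L = "subtopology (simplex_top (Suc n)) {t \<in> standard_simplex (Suc n). t 0 \<le> 1/2}"
  have "continuous_map ?L euclideanreal (\<lambda>t. t (Suc i) / (1 - t 0))" for i
    by (intro continuous_map_real_divide continuous_map_diff continuous_map_from_subtopology
        continuous_map_simplex_top_coordinate continuous_map_const [THEN iffD2]) auto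
  moreover have "cone_projection \<in> topspace ?L \<rightarrow> standard_simplex n"
    by (auto intro: cone_projection_in_standard_simplex)
  ultimately show ?thesis
    unfolding simplex_top_def [of n] continuous_map_in_subtopology
    by (auto simp: continuous_map_componentwise_UNIV cone_projection_def)
qed

lemma mv_map_imp_closedin:
  assumes "Hausdorff_space X" "compact_space S" "Hausdorff_space S" "mv_map S X T"
  shows "closedin (prod_topology S X) T"
proof -
  have T: "T \<subseteq> topspace (prod_topology S X)" "fst ` T = topspace S"
    and "proper_map (subtopology (prod_topology S X) T) S fst"
    using assms(4) by (auto simp: mv_map_def)
  then have "compact_space (subtopology (prod_topology S X) T)"
    by (intro compact_space_proper_map_preimage [OF _ _ assms(2)]) (auto simp: Int_absorb1)
  then have "compactin (prod_topology S X) T"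
    using T by (simp add: compactin_subspace)
  then show ?thesis
    using assms by (simp add: compactin_imp_closedin Hausdorff_space_prod_topology)
qed

lemma mv_map_if_closedin:
  assumes "compact_space S" "Hausdorff_space S" "compact_space X"
    and "closedin (prod_topology S X) T" "fst ` T = topspace S"
    and "\<And>s. s \<in> topspace S \<Longrightarrow> finite {x. (s, x) \<in> T}"
  shows "mv_map S X T"
proof -
  have "compactin (prod_topology S X) T"
    using assms by (simp add: closedin_compact_space compact_space_prod_topology)
  then have "proper_map (subtopology (prod_topology S X) T) S fst"
    by (intro continuous_imp_proper_map Hausdorff_imp_kc_space assms(2)
        continuous_map_from_subtopology continuous_map_fst) (simp add: compactin_subspace)
  then show ?thesis
    using assms closedin_subset [OF assms(4)] by (auto simp: mv_map_def)
qed

lemma closedin_mv_cone: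
  assumes "Hausdorff_space X" "x0 \<in> topspace X" "closedin (prod_topology (simplex_top n) X) \<alpha>"
  shows "closedin (prod_topology (simplex_top (Suc n)) X) (mv_cone n x0 \<alpha>)"
proof -
  let ?S = "simplex_top (Suc n)" and ?SX = "prod_topology (simplex_top (Suc n)) X"
  let ?L = "{t \<in> standard_simplex (Suc n). t 0 \<le> 1/2}"
  let ?U = "{t \<in> standard_simplex (Suc n). 1/2 \<le> t 0}"
  let ?A = "{(t, x). t \<in> standard_simplex (Suc n) \<and> t 0 \<le> 1/2 \<and> (cone_projection t, x) \<in> \<alpha>}"
  have "closedin ?S {t \<in> topspace ?S. t 0 \<in> C}" if "closed C" for C
    using closedin_continuous_map_preimage [OF continuous_map_simplex_top_coordinate] that by simp
  from this [of "{..1/2}"] this [of "{1/2..}"]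
  have L: "closedin ?SX (?L \<times> topspace X)" and U: "closedin ?SX (?U \<times> {x0})"
    using closedin_Hausdorff_singleton [OF assms(1,2)] by (auto simp: closedin_prod_Times_iff)
  have "continuous_map (prod_topology (subtopology ?S ?L) X) (prod_topology (simplex_top n) X)
          (\<lambda>(t, x). (cone_projection t, x))"
    by (intro continuous_map_prod_top [THEN iffD2] disjI2 conjI continuous_map_cone_projection)
       (simp add: id_def [symmetric])
  from closedin_continuous_map_preimage [OF this assms(3)]
  have "closedin (subtopology ?SX (?L \<times> topspace X))
          {p \<in> topspace (subtopology ?SX (?L \<times> topspace X)). (cone_projection (fst p), snd p) \<in> \<alpha>}"
    by (simp only: prod_topology_subtopology case_prod_beta)
  moreover have "{p \<in> topspace (subtopology ?SX (?L \<times> topspace X)). (cone_projection (fst p), snd p) \<in> \<alpha>} = ?A"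
    using closedin_subset [OF assms(3)] by auto
  ultimately have "closedin (subtopology ?SX (?L \<times> topspace X)) ?A"
    by simp
  then have "closedin ?SX ?A"
    using L closedin_trans_full by blast
  moreover have "mv_cone n x0 \<alpha> = ?A \<union> ?U \<times> {x0}"
    by (auto simp: mv_cone_def)
  ultimately show ?thesis
    using U by (simp add: closedin_Un)
qed

lemma mv_map_mv_cone:
  assumes "compact_space X" "Hausdorff_space X" "x0 \<in> topspace X" "mv_map (simplex_top n) X \<alpha>"
  shows "mv_map (simplex_top (Suc n)) X (mv_cone n x0 \<alpha>)"
proof (rule mv_map_if_closedin)
  have \<alpha>: "fst ` \<alpha> = standard_simplex n" "\<And>s. s \<in> standard_simplex n \<Longrightarrow> finite {x. (s, x) \<in> \<alpha>}"
    using assms(4) by (auto simp: mv_map_def)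
  have projection: "cone_projection t \<in> standard_simplex n" if "t \<in> standard_simplex (Suc n)" "t 0 \<le> 1/2" for t
    using cone_projection_in_standard_simplex that by force
  show "closedin (prod_topology (simplex_top (Suc n)) X) (mv_cone n x0 \<alpha>)"
    using assms by (intro closedin_mv_cone mv_map_imp_closedin compact_space_simplex_top Hausdorff_space_simplex_top)
  show "fst ` mv_cone n x0 \<alpha> = topspace (simplex_top (Suc n))"
  proof (intro equalityI subsetI)
    fix t assume t: "t \<in> topspace (simplex_top (Suc n))"
    show "t \<in> fst ` mv_cone n x0 \<alpha>"
    proof (cases "t 0 \<le> 1/2")
      case True
      then obtain x where "(cone_projection t, x) \<in> \<alpha>"
        using projection t \<alpha>(1) by fastforce
      with t True have "(t, x) \<in> mv_cone n x0 \<alpha>"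
        by (simp add: mv_cone_def)
      then show ?thesis by force
    next
      case False
      with t have "(t, x0) \<in> mv_cone n x0 \<alpha>"
        by (simp add: mv_cone_def)
      then show ?thesis by force
    qed
  qed (auto simp: mv_cone_def)
  show "finite {x. (t, x) \<in> mv_cone n x0 \<alpha>}" if "t \<in> topspace (simplex_top (Suc n))" for t
  proof -
    have "{x. (t, x) \<in> mv_cone n x0 \<alpha>} \<subseteq> {x. (cone_projection t, x) \<in> \<alpha> \<and> t 0 \<le> 1/2} \<union> {x0}"
      by (auto simp: mv_cone_def)
    moreover have "finite {x. (cone_projection t, x) \<in> \<alpha> \<and> t 0 \<le> 1/2}"
      using \<alpha>(2) projection that by (cases "t 0 \<le> 1/2") auto
    ultimately show ?thesis
      by (simp add: finite_subset)
  qed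
qed (use assms in \<open>simp_all add: compact_space_simplex_top Hausdorff_space_simplex_top\<close>)

lemma keys_mv_cone_chain:
  assumes "compact_space X" "Hausdorff_space X" "x0 \<in> topspace X"
    and "Poly_Mapping.keys c \<subseteq> mv_simplex_set n X"
  shows "Poly_Mapping.keys (mv_cone_chain n x0 c) \<subseteq> mv_simplex_set (Suc n) X"
  using keys_frag_extend [of "\<lambda>\<alpha>. frag_of (mv_cone n x0 \<alpha>)" c] assms mv_map_mv_cone
  by (fastforce simp: mv_cone_chain_def mv_simplex_set_def)

lemma frag_extend_in_hom: "frag_extend f \<in> hom (free_Abelian_group S) (free_Abelian_group UNIV)"
  by (rule homI) (simp_all add: frag_extend_add)

lemma group_hom_mv_boundary: "group_hom (mv_chain_group n X) (free_Abelian_group UNIV) (mv_boundary n)"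
  by (simp add: group_hom_def group_hom_axioms_def mv_chain_group_def mv_boundary_def [abs_def] frag_extend_in_hom)

lemma carrier_mv_cycle_group:
  "carrier (mv_cycle_group n X) = {c \<in> carrier (mv_chain_group n X). mv_boundary n c = 0}"
proof -
  have "subgroup (kernel (mv_chain_group n X) (free_Abelian_group UNIV) (mv_boundary n)) (mv_chain_group n X)"
    using group_hom_mv_boundary by (rule group_hom.subgroup_kernel)
  then show ?thesis
    unfolding mv_cycle_group_def
    by (simp add: kernel_def subgroup.carrier_subgroup_generated_subgroup)
qed

(* H need not lie in the carrier of G: the homology group is Z_n Mod B_n, taken without
   knowing that B_n is contained in Z_n. *)
lemma trivial_group_FactGroup_of_subset:
  assumes "group K" "subgroup H K" "mult G = mult K" "carrier G \<subseteq> H" "carrier G \<noteq> {}"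
  shows "trivial_group (G Mod H)"
proof -
  have "H #>\<^bsub>G\<^esub> g = H" if "g \<in> H" for g
    using subgroup.rcos_const [OF assms(2,1) that] assms(3) by (simp add: r_coset_def)
  then have carrier: "carrier (G Mod H) = {H}"
    using assms(4,5) by (auto simp: FactGroup_def RCOSETS_def)
  have mult: "H <#>\<^bsub>G\<^esub> H = H"
    using group.subgroup_mult_id [OF assms(1,2)] assms(3) by (simp add: FactGroup_def set_mult_def)
  have one: "\<one>\<^bsub>G Mod H\<^esub> = H"
    by (simp add: FactGroup_def)
  have "group (G Mod H)"
    by (rule groupI) (auto simp: carrier mult one)
  then show ?thesis
    by (simp add: trivial_group_def carrier one)
qed

lemma mv_cycles_subset_boundaries:
  assumes "compact_space X" "Hausdorff_space X"
  shows "carrier (mv_cycle_group (Suc n) X)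
           \<subseteq> mv_boundary (Suc (Suc n)) ` carrier (mv_chain_group (Suc (Suc n)) X)"
proof
  fix z assume "z \<in> carrier (mv_cycle_group (Suc n) X)"
  then have z: "Poly_Mapping.keys z \<subseteq> mv_simplex_set (Suc n) X" and "mv_boundary (Suc n) z = 0"
    by (auto simp: carrier_mv_cycle_group mv_chain_group_def)
  show "z \<in> mv_boundary (Suc (Suc n)) ` carrier (mv_chain_group (Suc (Suc n)) X)"
  proof (cases "z = 0")
    case True
    then show ?thesis
      by (intro image_eqI [where x = 0]) (simp_all add: mv_boundary_def mv_chain_group_def)
  next
    case False
    then obtain \<alpha> where "\<alpha> \<in> mv_simplex_set (Suc n) X"
      using z by fastforce
    then obtain x0 where x0: "x0 \<in> topspace X"
      using nonempty_standard_simplex by (fastforce simp: mv_simplex_set_def mv_map_def)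
    have "Poly_Mapping.keys z \<subseteq> Pow (standard_simplex (Suc n) \<times> UNIV)"
      using z by (auto simp: mv_simplex_set_def mv_map_def)
    then have "mv_boundary (Suc (Suc n)) (mv_cone_chain (Suc n) x0 z) = z"
      using \<open>mv_boundary (Suc n) z = 0\<close>
      by (simp add: mv_boundary_mv_cone_chain) (simp add: mv_cone_chain_def)
    moreover have "mv_cone_chain (Suc n) x0 z \<in> carrier (mv_chain_group (Suc (Suc n)) X)"
      using keys_mv_cone_chain [OF assms x0 z] by (simp add: mv_chain_group_def)
    ultimately show ?thesis
      by force
  qed
qed

theorem mainTheorem6:
  fixes X :: "'a topology" and n :: nat
  assumes "compact_space X" and "Hausdorff_space X" and "n > 0"
  shows "trivial_group (mv_homology_group n X)"
proof -
  obtain m where n: "n = Suc m"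
    using assms(3) gr0_implies_Suc by blast
  let ?B = "mv_boundary (Suc n) ` carrier (mv_chain_group (Suc n) X)"
  have "subgroup ?B (free_Abelian_group UNIV)"
    using group_hom_mv_boundary by (rule group_hom.img_is_subgroup)
  moreover have "carrier (mv_cycle_group n X) \<subseteq> ?B"
    unfolding n using assms(1,2) by (rule mv_cycles_subset_boundaries)
  moreover have "0 \<in> carrier (mv_cycle_group n X)"
    by (simp add: carrier_mv_cycle_group mv_boundary_def mv_chain_group_def)
  moreover have "mult (mv_cycle_group n X) = mult (free_Abelian_group UNIV)"
    by (simp add: mv_cycle_group_def mv_chain_group_def free_Abelian_group_def)
  ultimately show ?thesis
    unfolding mv_homology_group_def
    by (intro trivial_group_FactGroup_of_subset [OF group_free_Abelian_group]) auto
qed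

end
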